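(* Let $w$ be a Coxeter element of the irreducible euclidean Coxeter group $W$ of type $\widetilde A_n$. Then there is a chamber $\sigma$ of the Coxeter complex of $W$ which produces $w$ as one of its bigon Coxeter elements.
   Context: $W=\mathrm{Cox}(\widetilde A_n)$ is generated by the reflections of a euclidean space in the facets of a euclidean simplex, acting properly and cocompactly; chambers (images of the simplex) form the Coxeter complex and the reflections in the facets of any chamber are canonically identified with the vertices of the diagram $\Gamma$, which for $n\ge2$ is a cycle on $n+1$ vertices. The Coxeter element produced by a chamber and an acyclic orientation of $\Gamma$ is the product of the reflections in its facets in any order where $s$ precedes $t$ whenever there is an edge $s\to t$. For $n\ge2$, a $(p,q)$-bigon Coxeter element produced by a chamber is one produced by an acyclic orientation with a unique source and a unique sink, $p$ consecutive edges oriented clockwise and $q$ consecutive edges oriented counterclockwise, with $p\ge q\ge1$ and $p+q=n+1$; bigon Coxeter elements are the $(p,q)$-bigon Coxeter elements for such $p,q$. For $n=1$, a Coxeter element (product of the two facet reflections of a chamber in either order) is regarded as a $(1,1)$-bigon Coxeter element. *)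

theory Defs
  imports "HOL-Analysis.Analysis"
begin

text \<open>Standard model of the euclidean Coxeter group of type affine A_n, with n + 1 = CARD('n):
  the euclidean space is V = {x in R^(n+1). sum of coordinates = 0}; the reflecting
  hyperplanes are H(i,j,k) = {x in V. x_i - x_j = k} (i ~= j, k integer).
  Maps are extended to all of R^(n+1) by the same formula (they fix the diagonal direction),
  so equality of maps on R^(n+1) is equality on V.\<close>

definition ambient :: "(real^'n::finite) set" where
  "ambient = {x. (\<Sum>i\<in>UNIV. x$i) = 0}"

definition hyp :: "'n::finite \<Rightarrow> 'n \<Rightarrow> int \<Rightarrow> (real^'n) set" where
  "hyp i j k = {x \<in> ambient. x$i - x$j = of_int k}"

definition is_wall :: "(real^'n::finite) set \<Rightarrow> bool" where
  "is_wall H \<longleftrightarrow> (\<exists>i j k. i \<noteq> j \<and> H = hyp i j k)"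

definition refl :: "'n::finite \<Rightarrow> 'n \<Rightarrow> int \<Rightarrow> real^'n \<Rightarrow> real^'n" where
  "refl i j k x = x - (x$i - x$j - of_int k) *\<^sub>R (axis i 1 - axis j 1)"

definition chamber :: "(real^'n::finite) set \<Rightarrow> bool" where
  "chamber C \<longleftrightarrow> C \<in> components (ambient - \<Union>{H. is_wall H})"

definition facet_wall :: "(real^'n::finite) set \<Rightarrow> (real^'n) set \<Rightarrow> bool" where
  "facet_wall C H \<longleftrightarrow> is_wall H \<and> aff_dim (closure C \<inter> H) = aff_dim (ambient :: (real^'n) set) - 1"

definition facet_refls :: "(real^'n::finite) set \<Rightarrow> (real^'n \<Rightarrow> real^'n) set" where
  "facet_refls C = {refl i j k | i j k. i \<noteq> j \<and> facet_wall C (hyp i j k)}"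

definition cprod :: "('a \<Rightarrow> 'a) list \<Rightarrow> 'a \<Rightarrow> 'a" where
  "cprod ss = foldr (\<circ>) ss id"

definition coxeter_element :: "(real^'n::finite \<Rightarrow> real^'n) \<Rightarrow> bool" where
  "coxeter_element w \<longleftrightarrow> (\<exists>C ss. chamber C \<and> distinct ss \<and> set ss = facet_refls C \<and> w = cprod ss)"

text \<open>Edges of the Coxeter diagram of the facet reflections of C: m(s,t) >= 3, i.e. s,t do not commute.\<close>
definition dedge :: "(real^'n::finite) set \<Rightarrow> (real^'n \<Rightarrow> real^'n) \<Rightarrow> (real^'n \<Rightarrow> real^'n) \<Rightarrow> bool" where
  "dedge C s t \<longleftrightarrow> s \<in> facet_refls C \<and> t \<in> facet_refls C \<and> s \<noteq> t \<and> s \<circ> t \<noteq> t \<circ> s"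

definition acyclic_orientation ::
  "(real^'n::finite) set \<Rightarrow> ((real^'n \<Rightarrow> real^'n) \<times> (real^'n \<Rightarrow> real^'n)) set \<Rightarrow> bool" where
  "acyclic_orientation C Ori \<longleftrightarrow>
     Ori \<subseteq> {(s, t). dedge C s t} \<and>
     (\<forall>s t. dedge C s t \<longrightarrow> ((s, t) \<in> Ori \<longleftrightarrow> (t, s) \<notin> Ori)) \<and>
     acyclic Ori"

definition is_source :: "(real^'n::finite) set \<Rightarrow> ((real^'n \<Rightarrow> real^'n) \<times> (real^'n \<Rightarrow> real^'n)) set
     \<Rightarrow> (real^'n \<Rightarrow> real^'n) \<Rightarrow> bool" where
  "is_source C Ori s \<longleftrightarrow> s \<in> facet_refls C \<and> (\<forall>t. (t, s) \<notin> Ori)"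

definition is_sink :: "(real^'n::finite) set \<Rightarrow> ((real^'n \<Rightarrow> real^'n) \<times> (real^'n \<Rightarrow> real^'n)) set
     \<Rightarrow> (real^'n \<Rightarrow> real^'n) \<Rightarrow> bool" where
  "is_sink C Ori s \<longleftrightarrow> s \<in> facet_refls C \<and> (\<forall>t. (s, t) \<notin> Ori)"

definition produced_by_orientation :: "(real^'n::finite) set \<Rightarrow> ((real^'n \<Rightarrow> real^'n) \<times> (real^'n \<Rightarrow> real^'n)) set
     \<Rightarrow> (real^'n \<Rightarrow> real^'n) \<Rightarrow> bool" where
  "produced_by_orientation C Ori w \<longleftrightarrow>
     (\<exists>ss. distinct ss \<and> set ss = facet_refls C \<and>
        (\<forall>a b. a < length ss \<longrightarrow> b < length ss \<longrightarrow> (ss ! a, ss ! b) \<in> Ori \<longrightarrow> a < b) \<and>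
        w = cprod ss)"

text \<open>Bigon Coxeter elements produced by C (n = CARD('n) - 1). For n >= 2: acyclic orientation
  of the cycle diagram with a unique source and a unique sink (this is exactly the union of the
  (p,q)-bigon cases, p >= q >= 1, p + q = n + 1). For n = 1: any Coxeter element produced by C.\<close>
definition bigon_coxeter_element :: "(real^'n::finite) set \<Rightarrow> (real^'n \<Rightarrow> real^'n) \<Rightarrow> bool" where
  "bigon_coxeter_element C w \<longleftrightarrow>
     (if CARD('n) = 2 then
        (\<exists>ss. distinct ss \<and> set ss = facet_refls C \<and> w = cprod ss)
      else
        (\<exists>Ori. acyclic_orientation C Ori \<and> (\<exists>!s. is_source C Ori s) \<and> (\<exists>!s. is_sink C Ori s) \<and>
             produced_by_orientation C Ori w))"

end

theory Submission
  imports Defs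
begin

text \<open>In this model every chamber is an alcove: for an enumeration \<open>e\<^sub>0, \<dots>, e\<^sub>n\<close> of the
  coordinates and integers \<open>c\<close>, the set where the shifted coordinates \<open>u\<^sub>i = y\<^sub>i - c\<^sub>i\<close> satisfy
  \<open>u\<^bsub>e\<^sub>0\<^esub> > u\<^bsub>e\<^sub>1\<^esub> > \<dots> > u\<^bsub>e\<^sub>n\<^esub> > u\<^bsub>e\<^sub>0\<^esub> - 1\<close>. Its facet reflections \<open>s\<^sub>0, \<dots>, s\<^sub>n\<close> are the
  reflections in the walls where consecutive inequalities become equalities, and \<open>s\<^sub>k\<close>, \<open>s\<^sub>l\<close>
  commute unless \<open>k\<close> and \<open>l\<close> are cyclically adjacent, so the diagram is the cycle
  \<open>0 - 1 - \<dots> - n - 0\<close>.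

  A Coxeter element \<open>w\<close> is a product of the \<open>s\<^sub>k\<close> in some order, which orients the cycle.
  If some \<open>k \<noteq> 0\<close> is a source, \<open>s\<^sub>k\<close> commutes with all factors before it, so
  \<open>w = s\<^sub>k u = (s\<^sub>k u s\<^sub>k) s\<^sub>k\<close>: this is the product, in the same order, of the facet reflections
  \<open>s\<^sub>k s\<^sub>j s\<^sub>k\<close> and \<open>s\<^sub>k\<close> of the neighbouring chamber across the \<open>k\<close>-th wall, except that
  \<open>k\<close> has moved to the end and become a sink. This lowers the sum of the \<open>j\<close> with an edge
  \<open>j \<rightarrow> j + 1\<close>, so eventually \<open>0\<close> is the only source. Then the edges oriented \<open>j \<rightarrow> j + 1\<close>
  form an initial segment of the cycle, and there is exactly one sink.\<close>

section \<open>Cyclic successor\<close>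

lemma Suc_mod_if: "k < N \<Longrightarrow> Suc k mod N = (if Suc k = N then 0 else Suc k)"
  by auto

lemma Suc_mod_neq_self: "2 \<le> N \<Longrightarrow> k < N \<Longrightarrow> Suc k mod N \<noteq> k"
  by (auto simp: Suc_mod_if)

lemma Suc_mod_inj: "p < N \<Longrightarrow> q < N \<Longrightarrow> Suc p mod N = Suc q mod N \<Longrightarrow> p = q"
  by (auto simp: Suc_mod_if split: if_splits)

lemma Suc_mod_eq_0_iff: "k < N \<Longrightarrow> Suc k mod N = 0 \<longleftrightarrow> k = N - 1"
  by (auto simp: Suc_mod_if)

lemma Suc_mod_eq_iff_pred: "0 < k \<Longrightarrow> k < N \<Longrightarrow> q < N \<Longrightarrow> k = Suc q mod N \<longleftrightarrow> q = k - 1"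
  by (auto simp: Suc_mod_if)

lemma Suc_mod_not_two_cycle:
  "3 \<le> N \<Longrightarrow> k < N \<Longrightarrow> k' < N \<Longrightarrow> k = Suc k' mod N \<Longrightarrow> k' \<noteq> Suc k mod N"
  by (auto simp: Suc_mod_if split: if_splits)

abbreviation cyc_adj :: "nat \<Rightarrow> nat \<Rightarrow> nat \<Rightarrow> bool" where
  "cyc_adj N p q \<equiv> q = Suc p mod N \<or> p = Suc q mod N"

lemma cyc_adj_neq: "2 \<le> N \<Longrightarrow> p < N \<Longrightarrow> q < N \<Longrightarrow> cyc_adj N p q \<Longrightarrow> p \<noteq> q"
  using Suc_mod_neq_self[of N p] by auto

lemma cyc_adj_pos_iff: "0 < k \<Longrightarrow> k < N \<Longrightarrow> q < N \<Longrightarrow> cyc_adj N k q \<longleftrightarrow> q = Suc k mod N \<or> q = k - 1"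
  using Suc_mod_eq_iff_pred by blast

section \<open>Products and positions along lists\<close>

lemma cprod_Nil [simp]: "cprod [] = id"
  by (simp add: cprod_def)

lemma cprod_Cons [simp]: "cprod (f # fs) = f \<circ> cprod fs"
  by (simp add: cprod_def)

lemma cprod_append: "cprod (fs @ gs) = cprod fs \<circ> cprod gs"
  by (induction fs) (auto simp: comp_assoc)

lemma cprod_move_to_front:
  assumes "\<forall>a\<in>set A. f a \<circ> f k = f k \<circ> f a"
  shows "cprod (map f (A @ k # B)) = cprod (map f (k # A @ B))"
  using assms
proof (induction A)
  case (Cons a A)
  then have "f a (f k y) = f k (f a y)" "cprod (map f (A @ k # B)) = cprod (map f (k # A @ B))" for y
    by (simp_all add: fun_eq_iff)
  then show ?case by (simp add: fun_eq_iff)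
qed simp

lemma cprod_conjugate:
  assumes "\<And>y. s (s y) = y"
  shows "cprod (map (\<lambda>j. s \<circ> g j \<circ> s) xs) = s \<circ> cprod (map g xs) \<circ> s"
  using assms by (induction xs) (auto simp: fun_eq_iff)

lemma exists_index_list:
  assumes "distinct xs" "set xs = f ` A" "inj_on f A"
  shows "\<exists>L. distinct L \<and> set L = A \<and> xs = map f L"
proof (intro exI conjI)
  let ?L = "map (inv_into A f) xs"
  have "f (inv_into A f x) = x" if "x \<in> set xs" for x
    using that assms(2) by (simp add: f_inv_into_f)
  then show "xs = map f ?L" by (simp add: map_idI)
  show "distinct ?L" using assms by (simp add: distinct_map inj_on_inv_into)
  show "set ?L = A" using assms(2,3) by (simp add: inv_into_image_cancel)
qed

definition list_pos :: "'a list \<Rightarrow> 'a \<Rightarrow> nat" where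
  "list_pos L x = length (takeWhile (\<lambda>y. y \<noteq> x) L)"

lemma list_pos_append:
  "list_pos (xs @ ys) x = (if x \<in> set xs then list_pos xs x else length xs + list_pos ys x)"
  unfolding list_pos_def by (auto simp: takeWhile_append)

lemma list_pos_Cons: "list_pos (y # ys) x = (if y = x then 0 else Suc (list_pos ys x))"
  unfolding list_pos_def by auto

lemma list_pos_less: "x \<in> set L \<Longrightarrow> list_pos L x < length L"
  by (induction L) (auto simp: list_pos_Cons)

lemma nth_list_pos: "x \<in> set L \<Longrightarrow> L ! list_pos L x = x"
  by (induction L) (auto simp: list_pos_Cons)

lemma list_pos_nth: "distinct L \<Longrightarrow> a < length L \<Longrightarrow> list_pos L (L ! a) = a"
  using nth_list_pos[of "L ! a" L] list_pos_less[of "L ! a" L] nth_eq_iff_index_eq by auto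

definition precedes :: "'a list \<Rightarrow> 'a \<Rightarrow> 'a \<Rightarrow> bool" where
  "precedes L p q \<longleftrightarrow> p \<in> set L \<and> q \<in> set L \<and> list_pos L p < list_pos L q"

lemma precedes_asym: "precedes L p q \<Longrightarrow> \<not> precedes L q p"
  unfolding precedes_def by auto

lemma precedes_total: "p \<in> set L \<Longrightarrow> q \<in> set L \<Longrightarrow> p \<noteq> q \<Longrightarrow> precedes L p q \<or> precedes L q p"
  unfolding precedes_def by (metis linorder_neqE_nat nth_list_pos)

lemma precedes_Cons_iff: "precedes (x # L) p q \<longleftrightarrow> p = x \<and> q \<in> set L \<and> q \<noteq> x \<or> p \<noteq> x \<and> q \<noteq> x \<and> precedes L p q"
  unfolding precedes_def by (auto simp: list_pos_Cons)

lemma precedes_middle: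
  assumes "distinct (A @ k # B)" "a \<in> set A"
  shows "precedes (A @ k # B) a k"
  using assms list_pos_less[of a A] unfolding precedes_def by (auto simp: list_pos_append list_pos_Cons)

lemma precedes_move_last:
  assumes "distinct (A @ k # B)"
  shows "precedes (A @ B @ [k]) p q \<longleftrightarrow>
    (if q = k then p \<in> set A \<or> p \<in> set B else p \<noteq> k \<and> precedes (A @ k # B) p q)"
proof -
  have "\<And>x. x \<in> set A \<Longrightarrow> list_pos A x < length A" "\<And>x. x \<in> set B \<Longrightarrow> list_pos B x < length B"
    by (auto intro: list_pos_less)
  then show ?thesis
    using assms unfolding precedes_def by (auto simp: list_pos_append list_pos_Cons) force+
qed

section \<open>Orientations of a cycle induced by a list\<close>

definition cyc_arrow :: "nat \<Rightarrow> nat list \<Rightarrow> nat \<Rightarrow> nat \<Rightarrow> bool" where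
  "cyc_arrow N L p q \<longleftrightarrow> cyc_adj N p q \<and> precedes L p q"

definition cyc_source :: "nat \<Rightarrow> nat list \<Rightarrow> nat \<Rightarrow> bool" where
  "cyc_source N L k \<longleftrightarrow> (\<forall>p. \<not> cyc_arrow N L p k)"

definition cyc_sink :: "nat \<Rightarrow> nat list \<Rightarrow> nat \<Rightarrow> bool" where
  "cyc_sink N L k \<longleftrightarrow> (\<forall>q. \<not> cyc_arrow N L k q)"

lemma cyc_source_pos_iff:
  assumes "set L = {..<N}" "0 < k" "k < N"
  shows "cyc_source N L k \<longleftrightarrow> \<not> precedes L (Suc k mod N) k \<and> \<not> precedes L (k - 1) k"
proof -
  have "cyc_arrow N L p k \<longleftrightarrow> (p = Suc k mod N \<or> p = k - 1) \<and> precedes L p k" for p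
    using cyc_adj_pos_iff[OF assms(2,3), of p] assms(1) unfolding cyc_arrow_def precedes_def by auto
  then show ?thesis unfolding cyc_source_def by auto
qed

lemma cyc_sink_pos_iff:
  assumes "set L = {..<N}" "0 < k" "k < N"
  shows "cyc_sink N L k \<longleftrightarrow> \<not> precedes L k (Suc k mod N) \<and> \<not> precedes L k (k - 1)"
proof -
  have "cyc_arrow N L k q \<longleftrightarrow> (q = Suc k mod N \<or> q = k - 1) \<and> precedes L k q" for q
    using cyc_adj_pos_iff[OF assms(2,3), of q] assms(1) unfolding cyc_arrow_def precedes_def by auto
  then show ?thesis unfolding cyc_sink_def by auto
qed

definition clockwise_weight :: "nat \<Rightarrow> nat list \<Rightarrow> nat" where
  "clockwise_weight N L = (\<Sum>j<N. if precedes L j (Suc j mod N) then j else 0)"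

lemma clockwise_weight_move_source_last:
  assumes N: "2 \<le> N" and d: "distinct (A @ k # B)" and s: "set (A @ k # B) = {..<N}"
    and k: "0 < k" "k < N" and src: "cyc_source N (A @ k # B) k"
  shows "clockwise_weight N (A @ B @ [k]) < clockwise_weight N (A @ k # B)"
proof -
  let ?L = "A @ k # B" and ?L' = "A @ B @ [k]"
  define f where "f L j = (if precedes L j (Suc j mod N) then j else 0)" for L j
  have Sk: "Suc (k - 1) mod N = k" "Suc k mod N \<noteq> k" "Suc k mod N < N"
    using k N Suc_mod_neq_self[of N k] by auto
  have "\<not> precedes ?L (k - 1) k" "\<not> precedes ?L (Suc k mod N) k"
    using src cyc_source_pos_iff[OF s k] by simp_all
  moreover have "Suc k mod N \<in> set ?L" unfolding s using Sk(3) by simp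
  then have "precedes ?L k (Suc k mod N) \<or> precedes ?L (Suc k mod N) k"
    using precedes_total[of k ?L "Suc k mod N"] Sk(2) by simp
  ultimately have "precedes ?L k (Suc k mod N)" by blast
  moreover have "k - 1 \<in> set A \<or> k - 1 \<in> set B"
  proof -
    have "k - 1 \<in> set ?L" unfolding s using k by simp
    then show ?thesis using k by auto
  qed
  ultimately have fk: "f ?L k = k" "f ?L' k = 0" "f ?L (k - 1) = 0" "f ?L' (k - 1) = k - 1"
    using \<open>\<not> precedes ?L (k - 1) k\<close> Sk(1,2) unfolding f_def precedes_move_last[OF d] by simp_all
  have f_rest: "f ?L' j = f ?L j" if j: "j \<in> {..<N} - {k} - {k - 1}" for j
  proof -
    have "Suc j mod N \<noteq> k" using j Suc_mod_eq_iff_pred[OF k] by auto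
    then show ?thesis using j unfolding f_def by (simp add: precedes_move_last[OF d])
  qed
  have split: "sum g {..<N} = g k + g (k - 1) + sum g ({..<N} - {k} - {k - 1})" for g :: "nat \<Rightarrow> nat"
  proof -
    have "sum g {..<N} = g k + sum g ({..<N} - {k})" using k by (simp add: sum.remove)
    also have "sum g ({..<N} - {k}) = g (k - 1) + sum g ({..<N} - {k} - {k - 1})"
      by (rule sum.remove) (use k in auto)
    finally show ?thesis by simp
  qed
  have weight: "clockwise_weight N L = sum (f L) {..<N}" for L
    by (simp add: clockwise_weight_def f_def)
  have "sum (f ?L') ({..<N} - {k} - {k - 1}) = sum (f ?L) ({..<N} - {k} - {k - 1})"
    by (rule sum.cong[OF refl f_rest])
  then show ?thesis
    unfolding weight split[of "f ?L'"] split[of "f ?L"] fk using k by simp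
qed

lemma downward_closed_threshold:
  fixes P :: "nat \<Rightarrow> bool"
  assumes down: "\<And>j. 0 < j \<Longrightarrow> j < N \<Longrightarrow> P j \<Longrightarrow> P (j - 1)" and "P 0" "\<not> P (N - 1)"
  shows "\<exists>p. 0 < p \<and> p < N \<and> (\<forall>j<N. P j \<longleftrightarrow> j < p)"
proof -
  define p where "p = (LEAST j. \<not> P j)"
  have "\<not> P p" unfolding p_def by (rule LeastI) (rule \<open>\<not> P (N - 1)\<close>)
  have below: "P j" if "j < p" for j using not_less_Least[of j "\<lambda>j. \<not> P j"] that by (simp add: p_def)
  have "P i" if "i \<le> j" "j < N" "P j" for i j
    using that
  proof (induction j)
    case (Suc j)
    then show ?case using down[of "Suc j"] by (cases "i = Suc j") auto
  qed simp
  then have "\<forall>j<N. P j \<longleftrightarrow> j < p"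
    using below \<open>\<not> P p\<close> by (metis not_less)
  moreover have "0 < p" using \<open>P 0\<close> \<open>\<not> P p\<close> by (cases p) auto
  moreover have "p \<le> N - 1" unfolding p_def by (rule Least_le) (rule \<open>\<not> P (N - 1)\<close>)
  moreover have "N \<noteq> 0" using \<open>P 0\<close> \<open>\<not> P (N - 1)\<close> by (cases N) auto
  ultimately show ?thesis by auto
qed

lemma no_interior_source_hd:
  assumes N: "2 \<le> N" and s: "set L = {..<N}"
    and no_src: "\<And>k. 0 < k \<Longrightarrow> k < N \<Longrightarrow> \<not> cyc_source N L k"
  obtains L' where "L = 0 # L'" "cyc_source N L 0"
proof -
  have "0 \<in> set L" using s N by simp
  then obtain x L' where L: "L = x # L'" by (cases L) auto
  have "cyc_source N L x" unfolding cyc_source_def cyc_arrow_def L by (simp add: precedes_Cons_iff)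
  moreover have "x < N" using s L by (metis list.set_intros(1) lessThan_iff)
  ultimately have "x = 0" using no_src by blast
  then show thesis using that L \<open>cyc_source N L x\<close> by blast
qed

lemma no_interior_source_unique_source:
  assumes "2 \<le> N" "set L = {..<N}" "\<And>k. 0 < k \<Longrightarrow> k < N \<Longrightarrow> \<not> cyc_source N L k" "k < N"
  shows "cyc_source N L k \<longleftrightarrow> k = 0"
  using no_interior_source_hd[OF assms(1-3)] assms(3,4) by blast

lemma no_interior_source_unique_sink:
  assumes N: "2 \<le> N" and s: "set L = {..<N}"
    and no_src: "\<And>k. 0 < k \<Longrightarrow> k < N \<Longrightarrow> \<not> cyc_source N L k"
  shows "\<exists>p<N. \<forall>k<N. cyc_sink N L k \<longleftrightarrow> k = p"
proof -
  obtain L' where L: "L = 0 # L'" using no_interior_source_hd[OF N s no_src] by blast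
  have first: "precedes L 0 q" "\<not> precedes L q 0" if "q < N" "q \<noteq> 0" for q
  proof -
    have "q \<in> set L" using s that(1) by simp
    then have "q \<in> set L'" using L that(2) by simp
    then show "precedes L 0 q" "\<not> precedes L q 0" using L that(2) by (simp_all add: precedes_Cons_iff)
  qed
  \<comment> \<open>the edges \<open>j \<rightarrow> j + 1\<close> oriented clockwise form an initial segment \<open>j < p\<close>\<close>
  define cw where "cw j = precedes L j (Suc j mod N)" for j
  have pred: "Suc (j - 1) mod N = j" if "0 < j" "j < N" for j using that by simp
  have down: "cw (j - 1)" if j: "0 < j" "j < N" "cw j" for j
  proof (rule ccontr)
    assume "\<not> cw (j - 1)"
    then have "cyc_source N L j"
      using cyc_source_pos_iff[OF s j(1,2)] precedes_asym[of L j "Suc j mod N"] j(3) pred[OF j(1,2)]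
      unfolding cw_def by simp
    then show False using no_src j(1,2) by blast
  qed
  have ends: "cw 0" "\<not> cw (N - 1)" using first[of 1] first[of "N - 1"] N by (simp_all add: cw_def)
  obtain p where p: "0 < p" "p < N" "\<And>j. j < N \<Longrightarrow> cw j \<longleftrightarrow> j < p"
    using downward_closed_threshold[of N cw, OF down ends] by blast
  have "cyc_sink N L k \<longleftrightarrow> k = p" if k: "k < N" for k
  proof (cases "k = 0")
    case True
    have "cyc_arrow N L 0 (Suc 0 mod N)" using ends(1) unfolding cyc_arrow_def cw_def by simp
    then show ?thesis using True p(1) unfolding cyc_sink_def by auto
  next
    case False
    then have "k \<in> set L" "k - 1 \<in> set L" "k \<noteq> k - 1" using s k by auto
    then have "precedes L k (k - 1) \<longleftrightarrow> \<not> cw (k - 1)"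
      using precedes_total precedes_asym pred[of k] False k unfolding cw_def by (metis gr0I)
    then show ?thesis
      using cyc_sink_pos_iff[OF s _ k] p(3)[OF k] p(3)[of "k - 1"] k False unfolding cw_def by auto
  qed
  then show ?thesis using p(2) by blast
qed

section \<open>Reflections\<close>

definition root_coeff :: "'n \<Rightarrow> 'n \<Rightarrow> 'n \<Rightarrow> int" where
  "root_coeff i j l = (if l = i then 1 else if l = j then -1 else 0)"

lemma refl_nth:
  "i \<noteq> j \<Longrightarrow> refl i j d x $ l = x $ Transposition.transpose i j l + of_int (d * root_coeff i j l)"
  by (auto simp: refl_def axis_def root_coeff_def Transposition.transpose_def algebra_simps)

lemma refl_refl: "i \<noteq> j \<Longrightarrow> refl i j d (refl i j d x) = x"
  by (auto simp: vec_eq_iff refl_nth root_coeff_def Transposition.transpose_def)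

lemma refl_swap: "refl j i (- d) = refl i j d"
  by (auto simp: fun_eq_iff vec_eq_iff refl_def axis_def algebra_simps)

lemma refl_conjugate:
  assumes "i \<noteq> j" "a \<noteq> b"
  shows "refl i j d (refl a b m (refl i j d x)) =
    refl (Transposition.transpose i j a) (Transposition.transpose i j b)
      (m - d * (root_coeff i j a - root_coeff i j b)) x"
proof -
  have "Transposition.transpose i j a \<noteq> Transposition.transpose i j b"
    using assms by (auto simp: Transposition.transpose_def)
  with assms show ?thesis
    by (auto simp: vec_eq_iff refl_nth root_coeff_def Transposition.transpose_def algebra_simps)
qed

lemma refl_commute_disjoint:
  assumes "a \<noteq> b" "i \<noteq> j" "a \<notin> {i, j}" "b \<notin> {i, j}"
  shows "refl a b d \<circ> refl i j m = refl i j m \<circ> refl a b d"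
  using assms by (auto simp: fun_eq_iff vec_eq_iff refl_nth root_coeff_def Transposition.transpose_def)

lemma refl_not_commute_chain:
  assumes "a \<noteq> b" "b \<noteq> c" "a \<noteq> c"
  shows "refl a b d \<circ> refl b c f \<noteq> refl b c f \<circ> refl a b d"
proof
  assume "refl a b d \<circ> refl b c f = refl b c f \<circ> refl a b d"
  then have "refl a b d (refl b c f x) $ a = refl b c f (refl a b d x) $ a" for x
    by (metis comp_apply)
  from this[of 0] this[of "axis c 1"] assms show False
    by (simp add: refl_nth root_coeff_def Transposition.transpose_def axis_def)
qed

lemma refl_eq_imp_same_pair:
  assumes "a \<noteq> b" "i \<noteq> j" "refl a b d = refl i j m"
  shows "{a, b} = {i, j}"
proof -
  have "Transposition.transpose a b l = Transposition.transpose i j l" for l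
  proof -
    let ?u = "Transposition.transpose a b l"
    have "refl a b d (axis ?u 1) $ l - refl a b d 0 $ l = refl i j m (axis ?u 1) $ l - refl i j m 0 $ l"
      using assms(3) by simp
    then have "axis ?u (1::real) $ Transposition.transpose i j l = 1"
      using assms(1,2) by (simp add: refl_nth)
    then show ?thesis by (simp add: axis_def split: if_splits)
  qed
  from this[of a] this[of b] assms(1,2) show ?thesis
    by (auto simp: Transposition.transpose_def split: if_splits)
qed

lemma hyp_swap: "hyp j i (- m) = hyp i j m"
  by (auto simp: hyp_def)

section \<open>Alcoves\<close>

definition enumeration :: "(nat \<Rightarrow> 'n::finite) \<Rightarrow> bool" where
  "enumeration e \<longleftrightarrow> bij_betw e {..<CARD('n)} UNIV"

definition alcove_const :: "(nat \<Rightarrow> 'n::finite) \<Rightarrow> ('n \<Rightarrow> int) \<Rightarrow> nat \<Rightarrow> int" where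
  "alcove_const e c k = c (e k) - c (e (Suc k mod CARD('n))) - (if k = CARD('n) - 1 then 1 else 0)"

definition bary :: "(nat \<Rightarrow> 'n::finite) \<Rightarrow> ('n \<Rightarrow> int) \<Rightarrow> nat \<Rightarrow> real^'n \<Rightarrow> real" where
  "bary e c k y = y $ e k - y $ e (Suc k mod CARD('n)) - of_int (alcove_const e c k)"

definition shifted_coord :: "(nat \<Rightarrow> 'n::finite) \<Rightarrow> ('n \<Rightarrow> int) \<Rightarrow> nat \<Rightarrow> real^'n \<Rightarrow> real" where
  "shifted_coord e c k y = y $ e k - of_int (c (e k))"

definition alcove :: "(nat \<Rightarrow> 'n::finite) \<Rightarrow> ('n \<Rightarrow> int) \<Rightarrow> (real^'n) set" where
  "alcove e c = {y \<in> ambient. \<forall>k<CARD('n). bary e c k y > 0}"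

definition alcove_refl :: "(nat \<Rightarrow> 'n::finite) \<Rightarrow> ('n \<Rightarrow> int) \<Rightarrow> nat \<Rightarrow> real^'n \<Rightarrow> real^'n" where
  "alcove_refl e c k = refl (e k) (e (Suc k mod CARD('n))) (alcove_const e c k)"

lemma enumeration_eq_iff:
  "enumeration e \<Longrightarrow> k < CARD('n) \<Longrightarrow> k' < CARD('n) \<Longrightarrow> e k = e k' \<longleftrightarrow> k = k'"
  for e :: "nat \<Rightarrow> 'n::finite"
  unfolding enumeration_def bij_betw_def inj_on_def by auto

lemma enumeration_surj: "enumeration e \<Longrightarrow> \<exists>k<CARD('n). e k = i"
  for e :: "nat \<Rightarrow> 'n::finite"
  unfolding enumeration_def bij_betw_def by (metis UNIV_I imageE lessThan_iff)

lemma enumeration_of_inj_on: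
  "inj_on e {..<CARD('n)} \<Longrightarrow> enumeration e" for e :: "nat \<Rightarrow> 'n::finite"
  unfolding enumeration_def bij_betw_def
  by (metis card_image card_lessThan card_subset_eq finite top_greatest)

lemma enumeration_next_neq:
  "enumeration e \<Longrightarrow> 2 \<le> CARD('n) \<Longrightarrow> k < CARD('n) \<Longrightarrow> e k \<noteq> e (Suc k mod CARD('n))"
  for e :: "nat \<Rightarrow> 'n::finite"
  using enumeration_eq_iff Suc_mod_neq_self by (metis mod_less_divisor zero_less_card_finite)

lemma bary_inner:
  "bary e c k y = (axis (e k) 1 - axis (e (Suc k mod CARD('n))) 1) \<bullet> y - of_int (alcove_const e c k)"
  for e :: "nat \<Rightarrow> 'n::finite"
  by (simp add: bary_def inner_diff_right inner_axis inner_commute[of _ y])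

lemma bary_Suc: "Suc k < CARD('n) \<Longrightarrow> bary e c k y = shifted_coord e c k y - shifted_coord e c (Suc k) y"
  for e :: "nat \<Rightarrow> 'n::finite"
  by (simp add: bary_def shifted_coord_def alcove_const_def)

lemma bary_last:
  "bary e c (CARD('n) - 1) y = shifted_coord e c (CARD('n) - 1) y - shifted_coord e c 0 y + 1"
  for e :: "nat \<Rightarrow> 'n::finite"
  by (simp add: bary_def shifted_coord_def alcove_const_def)

lemma shifted_coord_diff:
  fixes e :: "nat \<Rightarrow> 'n::finite"
  assumes "p \<le> q" "q < CARD('n)"
  shows "shifted_coord e c p y - shifted_coord e c q y = (\<Sum>k\<in>{p..<q}. bary e c k y)"
  using assms
proof (induction q)
  case (Suc q)
  then show ?case
    by (cases "p = Suc q") (auto simp: bary_Suc)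
qed simp

lemma sum_bary: "(\<Sum>k<CARD('n). bary e c k y) = 1"
  for e :: "nat \<Rightarrow> 'n::finite"
proof -
  obtain m where m: "CARD('n) = Suc m" using not0_implies_Suc by fastforce
  then have "(\<Sum>k<CARD('n). bary e c k y) = (\<Sum>k\<in>{0..<m}. bary e c k y) + bary e c m y"
    by (simp add: lessThan_atLeast0)
  then show ?thesis
    using shifted_coord_diff[of 0 m e c y] bary_last[of e c y] m by simp
qed

lemma ambient_eq: "(ambient :: (real^'n::finite) set) = {x. vec 1 \<bullet> x = 0}"
  by (simp add: ambient_def inner_vec_def)

lemma exists_bary:
  fixes e :: "nat \<Rightarrow> 'n::finite"
  assumes e: "enumeration e" and t: "(\<Sum>k<CARD('n). t k) = 1"
  shows "\<exists>y\<in>ambient. \<forall>k<CARD('n). bary e c k y = t k"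
proof -
  define N where "N = CARD('n)"
  have ie: "inv_into {..<N} e (e k) = k" if "k < N" for k
    using e that unfolding enumeration_def N_def bij_betw_def by (simp add: inv_into_f_f)
  \<comment> \<open>shifted coordinates are partial sums of \<open>- t\<close>, then subtract the mean to land in ambient\<close>
  define z :: "real^'n" where "z = (\<chi> i. - (\<Sum>j < inv_into {..<N} e i. t j) + of_int (c i))"
  define y where "y = z - vec ((\<Sum>i\<in>UNIV. z $ i) / N)"
  have "y \<in> ambient"
    unfolding ambient_def y_def N_def by (simp add: sum_subtractf)
  moreover have "bary e c k y = t k" if k: "k < N" for k
  proof (cases "Suc k < N")
    case True
    then show ?thesis
      using k ie[of k] ie[of "Suc k"] by (simp add: bary_def alcove_const_def y_def z_def N_def[symmetric])
  next
    case False
    then have "k = N - 1" "Suc k mod N = 0" using k by (auto simp: Suc_mod_if)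
    moreover have "(\<Sum>j<N. t j) = (\<Sum>j<N - 1. t j) + t (N - 1)"
      using k by (metis Suc_pred' gr_zeroI not_less0 sum.lessThan_Suc)
    moreover have "N - 1 < N" "0 < N" using k by auto
    ultimately show ?thesis
      using t ie[of 0] ie[of "N - 1"] by (simp add: bary_def alcove_const_def y_def z_def N_def[symmetric])
  qed
  ultimately show ?thesis unfolding N_def by blast
qed

lemma alcove_nonempty: "enumeration e \<Longrightarrow> alcove e c \<noteq> {}"
  for e :: "nat \<Rightarrow> 'n::finite"
  using exists_bary[of e "\<lambda>_. 1 / CARD('n)" c] by (force simp: alcove_def)

lemma convex_alcove: "convex (alcove e c)"
  for e :: "nat \<Rightarrow> 'n::finite"
proof -
  have "alcove e c = {y. vec 1 \<bullet> y = 0} \<inter> (\<Inter>k\<in>{..<CARD('n)}.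
      {y. (axis (e k) 1 - axis (e (Suc k mod CARD('n))) 1) \<bullet> y > of_int (alcove_const e c k)})"
    by (auto simp: alcove_def bary_inner ambient_eq)
  also have "convex \<dots>"
    by (intro convex_Int convex_INT convex_hyperplane convex_halfspace_gt ballI)
  finally show ?thesis .
qed

lemma alcove_shifted_coord_gap:
  fixes e :: "nat \<Rightarrow> 'n::finite"
  assumes y: "y \<in> alcove e c" and pq: "p < q" "q < CARD('n)"
  shows "0 < shifted_coord e c p y - shifted_coord e c q y \<and> shifted_coord e c p y - shifted_coord e c q y < 1"
proof -
  have pos: "k < CARD('n) \<Longrightarrow> bary e c k y > 0" for k using y by (auto simp: alcove_def)
  have "(\<Sum>k\<in>{p..<q}. bary e c k y) > 0"
    by (rule sum_pos) (use pq pos in auto)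
  moreover have "(\<Sum>k\<in>{p..<q}. bary e c k y) < (\<Sum>k<CARD('n). bary e c k y)"
    by (rule sum_strict_mono2[of _ _ "CARD('n) - 1"]) (use pq pos in \<open>auto intro: less_imp_le\<close>)
  ultimately show ?thesis
    using shifted_coord_diff[of p q e c y] pq sum_bary[of e c y] by simp
qed

lemma alcove_disjoint_hyp:
  fixes e :: "nat \<Rightarrow> 'n::finite"
  assumes e: "enumeration e" and ij: "i \<noteq> j"
  shows "alcove e c \<inter> hyp i j m = {}"
proof -
  have ordered: "y \<notin> hyp (e p) (e q) m" if "y \<in> alcove e c" "p < q" "q < CARD('n)" for p q m y
  proof
    assume "y \<in> hyp (e p) (e q) m"
    then have "shifted_coord e c p y - shifted_coord e c q y = of_int (m - c (e p) + c (e q))"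
      by (simp add: hyp_def shifted_coord_def)
    with alcove_shifted_coord_gap[OF that] show False
      by (simp only: of_int_0_less_iff of_int_less_1_iff) linarith
  qed
  obtain p q where pq: "p < CARD('n)" "q < CARD('n)" "e p = i" "e q = j"
    using enumeration_surj[OF e] by metis
  with ij have "p < q \<or> q < p" by (metis linorder_neqE_nat)
  then show ?thesis
  proof
    assume "p < q"
    then show ?thesis using ordered pq by blast
  next
    assume "q < p"
    then show ?thesis using ordered[of _ q p "- m"] pq hyp_swap[of j i m] by blast
  qed
qed

lemma is_wall_alcove_wall:
  "enumeration e \<Longrightarrow> 2 \<le> CARD('n) \<Longrightarrow> k < CARD('n) \<Longrightarrow>
    is_wall (hyp (e k) (e (Suc k mod CARD('n))) (alcove_const e c k))"
  for e :: "nat \<Rightarrow> 'n::finite"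
  using enumeration_next_neq unfolding is_wall_def by blast

lemma hyp_alcove_wall:
  "hyp (e k) (e (Suc k mod CARD('n))) (alcove_const e c k) = {y \<in> ambient. bary e c k y = 0}"
  for e :: "nat \<Rightarrow> 'n::finite"
  by (auto simp: hyp_def bary_def)

lemma chamber_alcove:
  fixes e :: "nat \<Rightarrow> 'n::finite"
  assumes e: "enumeration e" and N: "2 \<le> CARD('n)"
  shows "chamber (alcove e c)"
  unfolding chamber_def in_components_maximal
proof (intro conjI allI impI)
  show "alcove e c \<noteq> {}" using alcove_nonempty[OF e] .
  show "alcove e c \<subseteq> ambient - \<Union>{H. is_wall H}"
  proof
    fix y assume y: "y \<in> alcove e c"
    then have "y \<notin> H" if "is_wall H" for H
      using that alcove_disjoint_hyp[OF e] unfolding is_wall_def by blast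
    then show "y \<in> ambient - \<Union>{H. is_wall H}" using y by (auto simp: alcove_def)
  qed
  show "connected (alcove e c)" by (simp add: convex_alcove convex_connected)
  fix D assume D: "D \<noteq> {} \<and> alcove e c \<subseteq> D \<and> D \<subseteq> ambient - \<Union>{H. is_wall H} \<and> connected D"
  obtain p where p: "p \<in> alcove e c" using alcove_nonempty[OF e] by blast
  have "D \<subseteq> alcove e c"
  proof
    fix y assume y: "y \<in> D"
    have "bary e c k y > 0" if k: "k < CARD('n)" for k
    proof (rule ccontr)
      let ?a = "axis (e k) 1 - axis (e (Suc k mod CARD('n))) 1"
      assume "\<not> bary e c k y > 0"
      moreover have "bary e c k p > 0" using p k by (auto simp: alcove_def)
      ultimately obtain z where z: "z \<in> D" "?a \<bullet> z = of_int (alcove_const e c k)"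
        using connected_ivt_hyperplane[of D y p ?a "of_int (alcove_const e c k)"] D y p
        by (force simp: bary_inner)
      then have "z \<in> hyp (e k) (e (Suc k mod CARD('n))) (alcove_const e c k)"
        using D by (auto simp: hyp_alcove_wall bary_inner)
      then show False using z D is_wall_alcove_wall[OF e N k] by blast
    qed
    then show "y \<in> alcove e c" using y D by (auto simp: alcove_def)
  qed
  then show "D = alcove e c" using D by blast
qed

lemma exists_enumeration_decreasing:
  fixes f :: "'n::finite \<Rightarrow> real"
  assumes "inj f"
  shows "\<exists>e. enumeration e \<and> (\<forall>k k'. k < k' \<longrightarrow> k' < CARD('n) \<longrightarrow> f (e k') < f (e k))"
proof -
  define N where "N = CARD('n)"
  define L where "L = rev (sorted_list_of_set (range f))"
  have len: "length L = N" unfolding L_def N_def using assms by (simp add: card_image)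
  have "sorted_wrt (>) L" unfolding L_def by (simp add: sorted_wrt_rev)
  then have dec: "L ! k' < L ! k" if "k < k'" "k' < N" for k k'
    using that len by (simp add: sorted_wrt_iff_nth_less)
  define e where "e k = inv f (L ! k)" for k
  have fe: "f (e k) = L ! k" if "k < N" for k
  proof -
    have "L ! k \<in> range f" using that len nth_mem[of k L] by (simp add: L_def)
    then show ?thesis unfolding e_def by (simp add: f_inv_into_f)
  qed
  have "inj_on e {..<N}"
    by (rule inj_onI) (metis dec fe lessThan_iff linorder_neqE_nat order_less_irrefl)
  then show ?thesis
    using enumeration_of_inj_on dec fe N_def by (metis order.strict_trans)
qed

lemma chamber_is_alcove:
  fixes C :: "(real^'n::finite) set"
  assumes N: "2 \<le> CARD('n)" and C: "chamber C"
  shows "\<exists>e c. enumeration e \<and> C = alcove e c"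
proof -
  have Cc: "C \<in> components (ambient - \<Union>{H. is_wall H})" using C by (simp add: chamber_def)
  obtain x where x: "x \<in> C" using in_components_nonempty[OF Cc] by blast
  then have xS: "x \<in> ambient" "\<And>H. is_wall H \<Longrightarrow> x \<notin> H"
    using in_components_subset[OF Cc] by auto
  \<comment> \<open>the fractional parts of the coordinates of \<open>x\<close> are distinct, and their order determines the alcove\<close>
  define c where "c i = \<lfloor>x $ i\<rfloor>" for i
  define f where "f i = x $ i - of_int (c i)" for i
  have f01: "0 \<le> f i \<and> f i < 1" for i unfolding f_def c_def by linarith
  have "inj f"
  proof (rule injI, rule ccontr)
    fix i j assume "f i = f j" "i \<noteq> j"
    then have "x \<in> hyp i j (c i - c j)" using xS by (simp add: hyp_def f_def)
    then show False using xS \<open>i \<noteq> j\<close> by (auto simp: is_wall_def)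
  qed
  then obtain e :: "nat \<Rightarrow> 'n" where e: "enumeration e"
    and dec: "\<And>k k'. k < k' \<Longrightarrow> k' < CARD('n) \<Longrightarrow> f (e k') < f (e k)"
    using exists_enumeration_decreasing by blast
  have sc: "shifted_coord e c k x = f (e k)" for k by (simp add: shifted_coord_def f_def)
  have "bary e c k x > 0" if k: "k < CARD('n)" for k
  proof (cases "Suc k < CARD('n)")
    case True
    then show ?thesis using bary_Suc[OF True] dec[of k "Suc k"] sc by simp
  next
    case False
    then have "k = CARD('n) - 1" using k by simp
    then show ?thesis using bary_last[of e c x] sc f01[of "e k"] f01[of "e 0"] by simp
  qed
  then have "x \<in> alcove e c" using xS by (simp add: alcove_def)
  then have "C = alcove e c"
    using components_eq[OF Cc chamber_alcove[OF e N, of c, unfolded chamber_def]] x by blast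
  then show ?thesis using e by blast
qed

section \<open>Facets of an alcove\<close>

definition closed_alcove :: "(nat \<Rightarrow> 'n::finite) \<Rightarrow> ('n \<Rightarrow> int) \<Rightarrow> (real^'n) set" where
  "closed_alcove e c = {y \<in> ambient. \<forall>k<CARD('n). bary e c k y \<ge> 0}"

lemma bary_zero_eq:
  "{y. bary e c k y = 0} = {y. (axis (e k) 1 - axis (e (Suc k mod CARD('n))) 1) \<bullet> y = of_int (alcove_const e c k)}"
  for e :: "nat \<Rightarrow> 'n::finite"
  by (auto simp: bary_inner)

lemma closed_closed_alcove: "closed (closed_alcove e c)"
  for e :: "nat \<Rightarrow> 'n::finite"
proof -
  have "closed_alcove e c = {y. vec 1 \<bullet> y = 0} \<inter> (\<Inter>k\<in>{..<CARD('n)}.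
      {y. (axis (e k) 1 - axis (e (Suc k mod CARD('n))) 1) \<bullet> y \<ge> of_int (alcove_const e c k)})"
    by (auto simp: closed_alcove_def bary_inner ambient_eq)
  also have "closed \<dots>"
    by (intro closed_Int closed_INT closed_hyperplane closed_halfspace_ge ballI)
  finally show ?thesis .
qed

lemma bary_affine_comb: "bary e c k ((1 - u) *\<^sub>R p + u *\<^sub>R y) = (1 - u) * bary e c k p + u * bary e c k y"
  by (simp add: bary_def algebra_simps)

lemma ambient_affine_comb: "p \<in> ambient \<Longrightarrow> y \<in> ambient \<Longrightarrow> (1 - u) *\<^sub>R p + u *\<^sub>R y \<in> ambient"
  by (simp add: ambient_def sum.distrib sum_distrib_left[symmetric])

lemma closure_alcove:
  fixes e :: "nat \<Rightarrow> 'n::finite"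
  assumes e: "enumeration e"
  shows "closure (alcove e c) = closed_alcove e c"
proof
  show "closure (alcove e c) \<subseteq> closed_alcove e c"
    by (rule closure_minimal[OF _ closed_closed_alcove]) (auto simp: alcove_def closed_alcove_def)
  show "closed_alcove e c \<subseteq> closure (alcove e c)"
  proof
    fix y assume y: "y \<in> closed_alcove e c"
    obtain p where p: "p \<in> alcove e c" using alcove_nonempty[OF e] by blast
    have "open_segment p y \<subseteq> alcove e c"
    proof
      fix x assume "x \<in> open_segment p y"
      then obtain u :: real where u: "0 < u" "u < 1" "x = (1 - u) *\<^sub>R p + u *\<^sub>R y"
        by (auto simp: in_segment)
      have "bary e c k x > 0" if "k < CARD('n)" for k
        using p y u that unfolding bary_affine_comb u(3)
        by (auto simp: alcove_def closed_alcove_def intro!: add_pos_nonneg)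
      then show "x \<in> alcove e c"
        using p y u ambient_affine_comb by (auto simp: alcove_def closed_alcove_def)
    qed
    then have "closure (open_segment p y) \<subseteq> closure (alcove e c)" by (rule closure_mono)
    then show "y \<in> closure (alcove e c)"
      using p by (cases "p = y") (auto intro: closure_subset[THEN subsetD])
  qed
qed

lemma affine_ambient: "affine (ambient :: (real^'n::finite) set)"
  unfolding ambient_eq by (rule affine_hyperplane)

lemma aff_dim_ambient: "aff_dim (ambient :: (real^'n::finite) set) = int CARD('n) - 1"
proof -
  have "(vec 1 :: real^'n) \<noteq> 0" by (simp add: vec_eq_iff)
  then show ?thesis unfolding ambient_eq by simp
qed

lemma exists_bary_vertex:
  fixes e :: "nat \<Rightarrow> 'n::finite"
  assumes "enumeration e" "k < CARD('n)"
  obtains y where "y \<in> ambient" "\<And>j. j < CARD('n) \<Longrightarrow> bary e c j y = (if j = k then 1 else 0)"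
  using exists_bary[OF assms(1), of "\<lambda>j. if j = k then 1 else 0" c] assms(2) by auto

lemma aff_dim_bary_zero:
  fixes e :: "nat \<Rightarrow> 'n::finite"
  assumes e: "enumeration e" and N: "2 \<le> CARD('n)" and k: "k < CARD('n)"
  shows "aff_dim (ambient \<inter> {y. bary e c k y = 0}) = int CARD('n) - 2"
proof -
  define k' where "k' = (if k = 0 then 1 else 0::nat)"
  have k': "k' < CARD('n)" "k' \<noteq> k" using N k unfolding k'_def by auto
  obtain y where "y \<in> ambient" "bary e c k y = 0"
    using exists_bary_vertex[OF e k'(1)] k k' by metis
  moreover obtain z where "z \<in> ambient" "bary e c k z = 1"
    using exists_bary_vertex[OF e k] k by metis
  ultimately show ?thesis
    unfolding bary_zero_eq aff_dim_affine_Int_hyperplane[OF affine_ambient]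
    by (auto simp: aff_dim_ambient bary_inner)
qed

lemma aff_dim_le_if_two_bary_zero:
  fixes e :: "nat \<Rightarrow> 'n::finite"
  assumes e: "enumeration e" and N: "2 \<le> CARD('n)"
    and k: "k1 < CARD('n)" "k2 < CARD('n)" "k1 \<noteq> k2"
    and S: "\<And>y. y \<in> S \<Longrightarrow> y \<in> ambient \<and> bary e c k1 y = 0 \<and> bary e c k2 y = 0"
  shows "aff_dim S \<le> int CARD('n) - 3"
proof -
  have "affine (ambient \<inter> {y. bary e c k1 y = 0})"
    unfolding bary_zero_eq by (intro affine_Int affine_ambient affine_hyperplane)
  moreover obtain z where "z \<in> ambient" "bary e c k1 z = 0" "bary e c k2 z = 1"
    using exists_bary_vertex[OF e k(2)] k by metis
  ultimately have "aff_dim (ambient \<inter> {y. bary e c k1 y = 0} \<inter> {y. bary e c k2 y = 0}) \<le> int CARD('n) - 3"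
    using aff_dim_bary_zero[OF e N k(1), of c] N
    unfolding bary_zero_eq[of e c k2] by (auto simp: aff_dim_affine_Int_hyperplane bary_inner)
  moreover have "S \<subseteq> ambient \<inter> {y. bary e c k1 y = 0} \<inter> {y. bary e c k2 y = 0}"
    using S by blast
  ultimately show ?thesis using aff_dim_subset by (metis order_trans)
qed

lemma facet_wall_alcove:
  fixes e :: "nat \<Rightarrow> 'n::finite"
  assumes e: "enumeration e" and N: "2 \<le> CARD('n)" and k: "k < CARD('n)"
  shows "facet_wall (alcove e c) (hyp (e k) (e (Suc k mod CARD('n))) (alcove_const e c k))"
proof -
  let ?F = "ambient \<inter> {y. bary e c k y = 0}"
  define U :: "(real^'n) set" where "U = (\<Inter>j\<in>{..<CARD('n)} - {k}.
    {y. (axis (e j) 1 - axis (e (Suc j mod CARD('n))) 1) \<bullet> y > of_int (alcove_const e c j)})"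
  have "convex ?F"
    unfolding bary_zero_eq ambient_eq by (intro convex_Int convex_hyperplane)
  moreover have "open U" unfolding U_def by (intro open_INT open_halfspace_gt ballI) auto
  moreover have "?F \<inter> U \<noteq> {}"
  proof -
    \<comment> \<open>the barycentre of the facet opposite to vertex \<open>k\<close>\<close>
    have "(\<Sum>j<CARD('n). if j = k then 0 else 1 / (real CARD('n) - 1)) = 1"
      using k N by (simp add: sum.If_cases Diff_eq[symmetric] card_Diff_singleton of_nat_diff)
    then obtain y where y: "y \<in> ambient" "\<And>j. j < CARD('n) \<Longrightarrow>
        bary e c j y = (if j = k then 0 else 1 / (real CARD('n) - 1))"
      using exists_bary[OF e] by blast
    then have "bary e c j y > 0" if "j < CARD('n)" "j \<noteq> k" for j
      using N that by simp
    then have "y \<in> ?F \<inter> U" using y(1) y(2)[OF k] by (auto simp: U_def bary_inner)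
    then show ?thesis by blast
  qed
  ultimately have "aff_dim (?F \<inter> U) = aff_dim ?F" by (rule aff_dim_convex_Int_open)
  moreover have "?F \<inter> U \<subseteq> closed_alcove e c \<inter> ?F"
    unfolding U_def closed_alcove_def bary_inner by (force intro: less_imp_le)
  ultimately have "aff_dim ?F \<le> aff_dim (closed_alcove e c \<inter> ?F)" by (metis aff_dim_subset)
  moreover have "aff_dim (closed_alcove e c \<inter> ?F) \<le> aff_dim ?F" by (rule aff_dim_subset) auto
  moreover have "closure (alcove e c) \<inter> hyp (e k) (e (Suc k mod CARD('n))) (alcove_const e c k) =
      closed_alcove e c \<inter> ?F"
    unfolding closure_alcove[OF e] hyp_alcove_wall by auto
  ultimately show ?thesis
    unfolding facet_wall_def using is_wall_alcove_wall[OF e N k] aff_dim_bary_zero[OF e N k]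
    by (simp add: aff_dim_ambient)
qed

lemma closed_alcove_hyp_cases:
  fixes e :: "nat \<Rightarrow> 'n::finite"
  assumes y: "y \<in> closed_alcove e c" "y \<in> hyp (e p) (e q) m" and pq: "p < q" "q < CARD('n)"
  shows "m - c (e p) + c (e q) = 0 \<and> (\<forall>k\<in>{p..<q}. bary e c k y = 0) \<or>
    m - c (e p) + c (e q) = 1 \<and> (\<forall>k\<in>{..<CARD('n)} - {p..<q}. bary e c k y = 0)"
proof -
  have nonneg: "\<And>k. k < CARD('n) \<Longrightarrow> bary e c k y \<ge> 0" using y by (auto simp: closed_alcove_def)
  have sub: "{p..<q} \<subseteq> {..<CARD('n)}" using pq by auto
  let ?S = "\<Sum>k\<in>{p..<q}. bary e c k y"
  have S: "?S = of_int (m - c (e p) + c (e q))"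
    using y shifted_coord_diff[of p q e c y] pq by (simp add: hyp_def shifted_coord_def)
  have rest: "(\<Sum>k\<in>{..<CARD('n)} - {p..<q}. bary e c k y) = 1 - ?S"
    using sum_diff[OF _ sub, of "\<lambda>k. bary e c k y"] sum_bary[of e c y] by simp
  have "0 \<le> ?S" using nonneg sub by (auto intro: sum_nonneg)
  moreover have "0 \<le> 1 - ?S" unfolding rest[symmetric] using nonneg by (auto intro: sum_nonneg)
  ultimately have "m - c (e p) + c (e q) = 0 \<or> m - c (e p) + c (e q) = 1"
    unfolding S by linarith
  then show ?thesis
  proof
    assume M: "m - c (e p) + c (e q) = 0"
    have "\<forall>k\<in>{p..<q}. bary e c k y = 0"
      by (rule sum_nonneg_eq_0_iff[THEN iffD1]) (use S M sub nonneg in auto)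
    with M show ?thesis by blast
  next
    assume M: "m - c (e p) + c (e q) = 1"
    have "\<forall>k\<in>{..<CARD('n)} - {p..<q}. bary e c k y = 0"
      by (rule sum_nonneg_eq_0_iff[THEN iffD1]) (use S M rest nonneg in auto)
    with M show ?thesis by blast
  qed
qed

lemma closed_alcove_hyp_two_zero:
  fixes e :: "nat \<Rightarrow> 'n::finite"
  assumes N: "3 \<le> CARD('n)" and pq: "p < q" "q < CARD('n)"
    and y0: "y0 \<in> closed_alcove e c \<inter> hyp (e p) (e q) m"
    and not_wall: "\<not> (q = Suc p \<and> m = alcove_const e c p \<or>
      p = 0 \<and> q = CARD('n) - 1 \<and> m = - alcove_const e c (CARD('n) - 1))"
  obtains k1 k2 where "k1 < CARD('n)" "k2 < CARD('n)" "k1 \<noteq> k2"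
    "\<And>y. y \<in> closed_alcove e c \<inter> hyp (e p) (e q) m \<Longrightarrow> bary e c k1 y = 0 \<and> bary e c k2 y = 0"
proof -
  let ?N = "CARD('n)" and ?M = "m - c (e p) + c (e q)"
  define Z where "Z = (if ?M = 0 then {p..<q} else {..<?N} - {p..<q})"
  have vanish: "\<forall>k\<in>Z. bary e c k y = 0" if "y \<in> closed_alcove e c \<inter> hyp (e p) (e q) m" for y
    using closed_alcove_hyp_cases[of y e c p q m] that pq by (auto simp: Z_def)
  have "Z \<subseteq> {..<?N}" using pq by (auto simp: Z_def)
  moreover have "?M = 0 \<or> ?M = 1"
    using closed_alcove_hyp_cases[of y0 e c p q m] y0 pq by auto
  \<comment> \<open>only the two walls of the alcove leave fewer than two barycentric coordinates vanishing\<close>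
  then obtain k1 k2 where "k1 \<in> Z" "k2 \<in> Z" "k1 \<noteq> k2"
  proof
    assume "?M = 0"
    have "q \<noteq> Suc p"
    proof
      assume "q = Suc p"
      with \<open>?M = 0\<close> pq have "m = alcove_const e c p" by (auto simp: alcove_const_def)
      with not_wall \<open>q = Suc p\<close> show False by blast
    qed
    then have "Suc p < q" using pq by simp
    then show thesis using that[of p "Suc p"] \<open>?M = 0\<close> by (simp add: Z_def)
  next
    assume M: "?M = 1"
    show thesis
    proof (cases "p = 0")
      case True
      have "q \<noteq> ?N - 1"
      proof
        assume "q = ?N - 1"
        with M True N have "m = - alcove_const e c (?N - 1)" by (auto simp: alcove_const_def)
        with not_wall True \<open>q = ?N - 1\<close> show False by blast
      qed
      then have "q < ?N - 1" using pq by simp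
      then show thesis using that[of q "?N - 1"] M True by (simp add: Z_def)
    next
      case False
      then have "0 \<in> Z" "?N - 1 \<in> Z" using M pq by (auto simp: Z_def)
      then show thesis using that[of 0 "?N - 1"] N by simp
    qed
  qed
  ultimately show thesis using that vanish by blast
qed

lemma facet_wall_alcove_cases:
  fixes e :: "nat \<Rightarrow> 'n::finite"
  assumes e: "enumeration e" and N: "3 \<le> CARD('n)" and pq: "p < q" "q < CARD('n)"
    and fw: "facet_wall (alcove e c) (hyp (e p) (e q) m)"
  shows "q = Suc p \<and> m = alcove_const e c p \<or>
    p = 0 \<and> q = CARD('n) - 1 \<and> m = - alcove_const e c (CARD('n) - 1)"
proof (rule ccontr)
  let ?S = "closed_alcove e c \<inter> hyp (e p) (e q) m"
  assume not_wall: "\<not> ?thesis"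
  have dim: "aff_dim ?S = int CARD('n) - 2"
    using fw by (simp add: facet_wall_def closure_alcove[OF e] aff_dim_ambient)
  moreover have "aff_dim ({} :: (real^'n) set) \<noteq> int CARD('n) - 2" using N by simp
  ultimately obtain y0 where "y0 \<in> ?S" by (metis ex_in_conv)
  then obtain k1 k2 where "k1 < CARD('n)" "k2 < CARD('n)" "k1 \<noteq> k2"
    "\<And>y. y \<in> ?S \<Longrightarrow> bary e c k1 y = 0 \<and> bary e c k2 y = 0"
    using closed_alcove_hyp_two_zero[OF N pq _ not_wall] by metis
  then have "aff_dim ?S \<le> int CARD('n) - 3"
    using N by (intro aff_dim_le_if_two_bary_zero[OF e]) (auto simp: closed_alcove_def)
  then show False using dim by simp
qed

lemma facet_refls_alcove:
  fixes e :: "nat \<Rightarrow> 'n::finite"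
  assumes e: "enumeration e" and N: "3 \<le> CARD('n)"
  shows "facet_refls (alcove e c) = alcove_refl e c ` {..<CARD('n)}"
proof
  show "alcove_refl e c ` {..<CARD('n)} \<subseteq> facet_refls (alcove e c)"
    using facet_wall_alcove[OF e] enumeration_next_neq[OF e] N
    unfolding facet_refls_def alcove_refl_def by fastforce
  show "facet_refls (alcove e c) \<subseteq> alcove_refl e c ` {..<CARD('n)}"
  proof
    fix r assume "r \<in> facet_refls (alcove e c)"
    then obtain i j m where r: "r = refl i j m" "i \<noteq> j" "facet_wall (alcove e c) (hyp i j m)"
      unfolding facet_refls_def by blast
    obtain p q where pq: "p < CARD('n)" "q < CARD('n)" "e p = i" "e q = j"
      using enumeration_surj[OF e] by metis
    with r(2) have "p < q \<or> q < p" by (metis linorder_neqE_nat)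
    then obtain a b d where ab: "a < b" "b < CARD('n)" "r = refl (e a) (e b) d"
      and fw: "facet_wall (alcove e c) (hyp (e a) (e b) d)"
      using r pq hyp_swap[of j i m] refl_swap[of j i m] by metis
    from facet_wall_alcove_cases[OF e N ab(1,2) fw] show "r \<in> alcove_refl e c ` {..<CARD('n)}"
    proof
      assume "b = Suc a \<and> d = alcove_const e c a"
      then have "r = alcove_refl e c a" using ab by (simp add: alcove_refl_def)
      then show ?thesis using ab by auto
    next
      assume "a = 0 \<and> b = CARD('n) - 1 \<and> d = - alcove_const e c (CARD('n) - 1)"
      then have "r = alcove_refl e c (CARD('n) - 1)"
        using ab refl_swap[of "e 0" "e (CARD('n) - 1)"] by (simp add: alcove_refl_def)
      then show ?thesis by simp
    qed
  qed
qed

section \<open>Facet reflections of an alcove\<close>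

lemma alcove_refl_refl:
  "enumeration e \<Longrightarrow> 2 \<le> CARD('n) \<Longrightarrow> k < CARD('n) \<Longrightarrow> alcove_refl e c k (alcove_refl e c k y) = y"
  for e :: "nat \<Rightarrow> 'n::finite"
  unfolding alcove_refl_def by (rule refl_refl[OF enumeration_next_neq])

lemma alcove_refl_inj:
  fixes e :: "nat \<Rightarrow> 'n::finite"
  assumes e: "enumeration e" and N: "3 \<le> CARD('n)" and k: "k < CARD('n)" "k' < CARD('n)"
    and eq: "alcove_refl e c k = alcove_refl e c k'"
  shows "k = k'"
proof -
  let ?K = "Suc k mod CARD('n)" and ?K' = "Suc k' mod CARD('n)"
  have N2: "2 \<le> CARD('n)" using N by simp
  have "{e k, e ?K} = {e k', e ?K'}"
    using eq unfolding alcove_refl_def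
    by (rule refl_eq_imp_same_pair[OF enumeration_next_neq[OF e N2 k(1)] enumeration_next_neq[OF e N2 k(2)]])
  then have "e k = e k' \<or> e k = e ?K' \<and> e ?K = e k'"
    by (auto simp: doubleton_eq_iff)
  moreover have "?K < CARD('n)" "?K' < CARD('n)" by simp_all
  ultimately have "k = k' \<or> k = ?K' \<and> ?K = k'"
    using enumeration_eq_iff[OF e] k by blast
  then show ?thesis using Suc_mod_not_two_cycle[OF N k] by auto
qed

lemma alcove_refl_commute_iff:
  fixes e :: "nat \<Rightarrow> 'n::finite"
  assumes e: "enumeration e" and N: "3 \<le> CARD('n)" and pq: "p < CARD('n)" "q < CARD('n)" "p \<noteq> q"
  shows "alcove_refl e c p \<circ> alcove_refl e c q = alcove_refl e c q \<circ> alcove_refl e c p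
    \<longleftrightarrow> \<not> cyc_adj CARD('n) p q"
proof -
  let ?P = "Suc p mod CARD('n)" and ?Q = "Suc q mod CARD('n)"
  have N2: "2 \<le> CARD('n)" using N by simp
  have PQ: "?P < CARD('n)" "?Q < CARD('n)" by simp_all
  have ne: "e p \<noteq> e ?P" "e q \<noteq> e ?Q" using enumeration_next_neq[OF e N2] pq by auto
  have chain: "alcove_refl e c a \<circ> alcove_refl e c b \<noteq> alcove_refl e c b \<circ> alcove_refl e c a"
    if ab: "a < CARD('n)" "b < CARD('n)" "b = Suc a mod CARD('n)" for a b
  proof -
    have "a \<noteq> Suc b mod CARD('n)" using Suc_mod_not_two_cycle[OF N ab(2,1,3)] .
    then have "e a \<noteq> e (Suc b mod CARD('n))" using enumeration_eq_iff[OF e ab(1)] by simp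
    then show ?thesis
      unfolding alcove_refl_def using refl_not_commute_chain enumeration_next_neq[OF e N2] ab by metis
  qed
  show ?thesis
  proof
    assume "alcove_refl e c p \<circ> alcove_refl e c q = alcove_refl e c q \<circ> alcove_refl e c p"
    then show "\<not> cyc_adj CARD('n) p q" using chain[of p q] chain[of q p] pq by metis
  next
    assume "\<not> cyc_adj CARD('n) p q"
    moreover have "?P \<noteq> ?Q" using Suc_mod_inj pq by blast
    ultimately have "e p \<noteq> e q" "e p \<noteq> e ?Q" "e ?P \<noteq> e q" "e ?P \<noteq> e ?Q"
      using enumeration_eq_iff[OF e] pq PQ by simp_all
    then show "alcove_refl e c p \<circ> alcove_refl e c q = alcove_refl e c q \<circ> alcove_refl e c p"
      unfolding alcove_refl_def using ne by (intro refl_commute_disjoint) auto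
  qed
qed

lemma enumeration_rotate:
  fixes e :: "nat \<Rightarrow> 'n::finite"
  assumes e: "enumeration e"
  shows "enumeration (\<lambda>k. e (Suc k mod CARD('n)))"
proof (rule enumeration_of_inj_on, rule inj_onI)
  fix x y assume xy: "x \<in> {..<CARD('n)}" "y \<in> {..<CARD('n)}"
    "e (Suc x mod CARD('n)) = e (Suc y mod CARD('n))"
  then have "Suc x mod CARD('n) = Suc y mod CARD('n)"
    using enumeration_eq_iff[OF e] by simp
  then show "x = y" using Suc_mod_inj xy by blast
qed

text \<open>Starting the enumeration at the next vertex (and shifting \<open>c\<close> accordingly) describes the
  same alcove, with the facet reflections rotated.\<close>
lemma alcove_refl_rotate:
  fixes e :: "nat \<Rightarrow> 'n::finite"
  assumes e: "enumeration e" and k: "k < CARD('n)"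
  shows "alcove_refl (\<lambda>k. e (Suc k mod CARD('n))) (\<lambda>i. c i + (if i = e 0 then 1 else 0)) k =
    alcove_refl e c (Suc k mod CARD('n))"
proof -
  define K where "K = Suc k mod CARD('n)"
  define K2 where "K2 = Suc K mod CARD('n)"
  have KN: "K < CARD('n)" "K2 < CARD('n)" "0 < CARD('n)" unfolding K_def K2_def by auto
  have "e K = e 0 \<longleftrightarrow> k = CARD('n) - 1"
    using enumeration_eq_iff[OF e KN(1,3)] Suc_mod_eq_0_iff[OF k] unfolding K_def by simp
  moreover have "e K2 = e 0 \<longleftrightarrow> K = CARD('n) - 1"
    using enumeration_eq_iff[OF e KN(2,3)] Suc_mod_eq_0_iff[OF KN(1)] unfolding K2_def by simp
  ultimately show ?thesis
    unfolding alcove_refl_def alcove_const_def K_def[symmetric] K2_def[symmetric] by (simp add: algebra_simps)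
qed

lemma exists_alcove_rotation:
  fixes e :: "nat \<Rightarrow> 'n::finite"
  assumes e: "enumeration e"
  shows "\<exists>e' c'. enumeration e' \<and>
    (\<forall>k<CARD('n). alcove_refl e' c' k = alcove_refl e c ((k + m) mod CARD('n)))"
proof (induction m)
  case 0
  then show ?case using e by auto
next
  case (Suc m)
  then obtain e' c' where e': "enumeration e'"
    and r: "\<forall>k<CARD('n). alcove_refl e' c' k = alcove_refl e c ((k + m) mod CARD('n))" by blast
  have "alcove_refl (\<lambda>k. e' (Suc k mod CARD('n))) (\<lambda>i. c' i + (if i = e' 0 then 1 else 0)) k =
      alcove_refl e c ((k + Suc m) mod CARD('n))" if k: "k < CARD('n)" for k
    using alcove_refl_rotate[OF e' k] r by (simp add: mod_add_left_eq)
  then show ?case using enumeration_rotate[OF e'] by blast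
qed

lemma alcove_const_swap_first:
  fixes e :: "nat \<Rightarrow> 'n::finite"
  assumes e: "enumeration e" and N: "3 \<le> CARD('n)" and k: "0 < k" "k < CARD('n)"
  shows "alcove_const (e \<circ> Transposition.transpose 0 1) c k = alcove_const e c k -
    alcove_const e c 0 * (root_coeff (e 0) (e 1) (e k) - root_coeff (e 0) (e 1) (e (Suc k mod CARD('n))))"
proof -
  define K where "K = Suc k mod CARD('n)"
  have N01: "0 < CARD('n)" "1 < CARD('n)" "Suc 0 mod CARD('n) = 1" using N by auto
  have K: "K < CARD('n)" "K \<noteq> 1" "K = 0 \<longleftrightarrow> k = CARD('n) - 1"
    using Suc_mod_inj[OF k(2) N01(1)] Suc_mod_eq_0_iff[OF k(2)] k N01 unfolding K_def by auto
  have "root_coeff (e 0) (e 1) (e k) = (if k = 1 then -1 else 0)"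
    using enumeration_eq_iff[OF e k(2) N01(1)] enumeration_eq_iff[OF e k(2) N01(2)] k(1)
    by (simp add: root_coeff_def)
  moreover have "root_coeff (e 0) (e 1) (e K) = (if K = 0 then 1 else 0)"
    using enumeration_eq_iff[OF e K(1) N01(1)] enumeration_eq_iff[OF e K(1) N01(2)] K(2)
    by (simp add: root_coeff_def)
  moreover have "K = 2" if "k = 1" using that N unfolding K_def by simp
  ultimately show ?thesis
    using k K N01 unfolding alcove_const_def K_def[symmetric]
    by (auto simp: Transposition.transpose_def algebra_simps)
qed

lemma alcove_refl_swap_first:
  fixes e :: "nat \<Rightarrow> 'n::finite"
  assumes e: "enumeration e" and N: "3 \<le> CARD('n)"
  defines "e' \<equiv> e \<circ> Transposition.transpose 0 1"
  shows "enumeration e'" "alcove_refl e' c 0 = alcove_refl e c 0"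
    and "\<And>k. 0 < k \<Longrightarrow> k < CARD('n) \<Longrightarrow>
      alcove_refl e' c k = alcove_refl e c 0 \<circ> alcove_refl e c k \<circ> alcove_refl e c 0"
proof -
  have N01: "0 < CARD('n)" "1 < CARD('n)" "Suc 0 mod CARD('n) = 1" "0 \<noteq> CARD('n) - 1" using N by auto
  have sw: "Transposition.transpose 0 1 j < CARD('n)" if "j < CARD('n)" for j :: nat
    using that N01 by (auto simp: Transposition.transpose_def)
  show "enumeration e'"
  proof (rule enumeration_of_inj_on, rule inj_onI)
    fix x y assume "x \<in> {..<CARD('n)}" "y \<in> {..<CARD('n)}" "e' x = e' y"
    then show "x = y"
      using enumeration_eq_iff[OF e] sw by (auto simp: e'_def Transposition.transpose_def split: if_splits)
  qed
  have R0: "alcove_refl e c 0 = refl (e 0) (e 1) (alcove_const e c 0)"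
    using N01 by (simp add: alcove_refl_def)
  show "alcove_refl e' c 0 = alcove_refl e c 0"
    using N01 refl_swap[of "e 1" "e 0" "alcove_const e c 0"]
    by (simp add: R0 alcove_refl_def alcove_const_def e'_def)
  fix k assume k: "0 < k" "k < CARD('n)"
  let ?K = "Suc k mod CARD('n)" and ?\<tau> = "Transposition.transpose (e 0) (e 1)"
  have \<tau>: "?\<tau> (e j) = e' j" if "j < CARD('n)" for j
    using enumeration_eq_iff[OF e that N01(1)] enumeration_eq_iff[OF e that N01(2)]
    by (auto simp: e'_def Transposition.transpose_def)
  have ne: "e 0 \<noteq> e 1" "e k \<noteq> e ?K"
    using enumeration_eq_iff[OF e N01(1,2)] enumeration_next_neq[OF e _ k(2)] N by auto
  show "alcove_refl e' c k = alcove_refl e c 0 \<circ> alcove_refl e c k \<circ> alcove_refl e c 0"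
    using refl_conjugate[OF ne, of "alcove_const e c 0" "alcove_const e c k"]
      alcove_const_swap_first[OF e N k, of c, folded e'_def] \<tau>[OF k(2)] \<tau>[of ?K] N01
    by (simp add: fun_eq_iff R0 alcove_refl_def)
qed

text \<open>The reflection \<open>s\<close> in the \<open>x\<close>-th wall maps the alcove to its neighbour across that wall,
  whose facet reflections are \<open>s\<close> itself and the conjugates \<open>s t s\<close> of the others.\<close>
lemma exists_alcove_conjugate:
  fixes e :: "nat \<Rightarrow> 'n::finite"
  assumes e: "enumeration e" and N: "3 \<le> CARD('n)" and x: "x < CARD('n)"
  shows "\<exists>e' c'. enumeration e' \<and> alcove_refl e' c' x = alcove_refl e c x \<and>
    (\<forall>k<CARD('n). k \<noteq> x \<longrightarrow> alcove_refl e' c' k = alcove_refl e c x \<circ> alcove_refl e c k \<circ> alcove_refl e c x)"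
proof -
  let ?N = "CARD('n)"
  obtain e1 c1 where e1: "enumeration e1"
    and r1: "\<forall>k<?N. alcove_refl e1 c1 k = alcove_refl e c ((k + x) mod ?N)"
    using exists_alcove_rotation[OF e] by blast
  define e2 where "e2 = e1 \<circ> Transposition.transpose 0 1"
  have e2: "enumeration e2" "alcove_refl e2 c1 0 = alcove_refl e1 c1 0"
    "\<And>k. 0 < k \<Longrightarrow> k < ?N \<Longrightarrow>
      alcove_refl e2 c1 k = alcove_refl e1 c1 0 \<circ> alcove_refl e1 c1 k \<circ> alcove_refl e1 c1 0"
    unfolding e2_def by (rule alcove_refl_swap_first[OF e1 N])+
  obtain e3 c3 where e3: "enumeration e3"
    and r3: "\<forall>k<?N. alcove_refl e3 c3 k = alcove_refl e2 c1 ((k + (?N - x)) mod ?N)"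
    using exists_alcove_rotation[OF e2(1)] by blast
  have s: "alcove_refl e1 c1 0 = alcove_refl e c x" using r1 x by simp
  have "alcove_refl e3 c3 x = alcove_refl e c x" using r3 x e2(2) s by simp
  moreover have "alcove_refl e3 c3 k = alcove_refl e c x \<circ> alcove_refl e c k \<circ> alcove_refl e c x"
    if k: "k < ?N" "k \<noteq> x" for k
  proof -
    define j where "j = (k + (?N - x)) mod ?N"
    have "(j + x) mod ?N = (k + ?N) mod ?N" using x by (simp add: j_def mod_add_left_eq)
    then have jx: "(j + x) mod ?N = k" using k by simp
    have "j \<noteq> 0"
    proof
      assume "j = 0"
      with jx x have "k = x" by simp
      with k show False by simp
    qed
    then have j: "j < ?N" "0 < j" unfolding j_def by simp_all
    have "alcove_refl e3 c3 k = alcove_refl e2 c1 j" using r3 k unfolding j_def by simp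
    also have "\<dots> = alcove_refl e1 c1 0 \<circ> alcove_refl e1 c1 j \<circ> alcove_refl e1 c1 0"
      using e2(3) j by simp
    finally show ?thesis using r1 j jx s by simp
  qed
  ultimately show ?thesis using e3 by blast
qed

section \<open>The orientation induced by an ordering of the facet reflections\<close>

definition list_orientation ::
  "(nat \<Rightarrow> 'n::finite) \<Rightarrow> ('n \<Rightarrow> int) \<Rightarrow> nat list \<Rightarrow> ((real^'n \<Rightarrow> real^'n) \<times> (real^'n \<Rightarrow> real^'n)) set" where
  "list_orientation e c L = {(alcove_refl e c p, alcove_refl e c q) | p q.
     p < CARD('n) \<and> q < CARD('n) \<and> cyc_arrow CARD('n) L p q}"

lemma mem_list_orientation_iff:
  fixes e :: "nat \<Rightarrow> 'n::finite"
  assumes e: "enumeration e" and N: "3 \<le> CARD('n)" and pq: "p < CARD('n)" "q < CARD('n)"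
  shows "(alcove_refl e c p, alcove_refl e c q) \<in> list_orientation e c L \<longleftrightarrow> cyc_arrow CARD('n) L p q"
proof
  assume "(alcove_refl e c p, alcove_refl e c q) \<in> list_orientation e c L"
  then obtain p' q' where pq': "p' < CARD('n)" "q' < CARD('n)" "cyc_arrow CARD('n) L p' q'"
    and eq: "alcove_refl e c p = alcove_refl e c p'" "alcove_refl e c q = alcove_refl e c q'"
    unfolding list_orientation_def by blast
  then show "cyc_arrow CARD('n) L p q"
    using alcove_refl_inj[OF e N pq(1) pq'(1) eq(1)] alcove_refl_inj[OF e N pq(2) pq'(2) eq(2)] by simp
qed (use pq in \<open>auto simp: list_orientation_def\<close>)

lemma dedge_alcove_iff:
  fixes e :: "nat \<Rightarrow> 'n::finite"
  assumes e: "enumeration e" and N: "3 \<le> CARD('n)"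
  shows "dedge (alcove e c) s t \<longleftrightarrow> (\<exists>p q. p < CARD('n) \<and> q < CARD('n) \<and> cyc_adj CARD('n) p q \<and>
    s = alcove_refl e c p \<and> t = alcove_refl e c q)"
proof -
  have "2 \<le> CARD('n)" using N by simp
  then have "p \<noteq> q" if "cyc_adj CARD('n) p q" "p < CARD('n)" "q < CARD('n)" for p q
    using cyc_adj_neq that by blast
  then show ?thesis
    using alcove_refl_commute_iff[OF e N] alcove_refl_inj[OF e N]
    unfolding dedge_def facet_refls_alcove[OF e N] by blast
qed

lemma acyclic_list_orientation:
  fixes e :: "nat \<Rightarrow> 'n::finite"
  assumes e: "enumeration e" and N: "3 \<le> CARD('n)" and s: "set L = {..<CARD('n)}"
  shows "acyclic_orientation (alcove e c) (list_orientation e c L)"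
  unfolding acyclic_orientation_def
proof (intro conjI allI impI)
  show "list_orientation e c L \<subseteq> {(s, t). dedge (alcove e c) s t}"
  proof
    fix x assume "x \<in> list_orientation e c L"
    then obtain p q where "x = (alcove_refl e c p, alcove_refl e c q)"
      "p < CARD('n)" "q < CARD('n)" "cyc_adj CARD('n) p q"
      unfolding list_orientation_def cyc_arrow_def by blast
    then show "x \<in> {(s, t). dedge (alcove e c) s t}" unfolding dedge_alcove_iff[OF e N] by blast
  qed
next
  fix s t assume "dedge (alcove e c) s t"
  then obtain p q where pq: "p < CARD('n)" "q < CARD('n)" "cyc_adj CARD('n) p q"
    and st: "s = alcove_refl e c p" "t = alcove_refl e c q"
    unfolding dedge_alcove_iff[OF e N] by blast
  have "p \<noteq> q" by (rule cyc_adj_neq) (use N pq in auto)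
  moreover have "p \<in> set L" "q \<in> set L" using s pq(1,2) by simp_all
  ultimately have "precedes L p q \<longleftrightarrow> \<not> precedes L q p"
    using precedes_total[of p L q] precedes_asym[of L p q] by blast
  then show "(s, t) \<in> list_orientation e c L \<longleftrightarrow> (t, s) \<notin> list_orientation e c L"
    unfolding st mem_list_orientation_iff[OF e N pq(1,2)] mem_list_orientation_iff[OF e N pq(2,1)]
    using pq(3) unfolding cyc_arrow_def by blast
next
  let ?m = "\<lambda>s. list_pos L (inv_into {..<CARD('n)} (alcove_refl e c) s)"
  have inj: "inj_on (alcove_refl e c) {..<CARD('n)}"
    by (intro inj_onI alcove_refl_inj[OF e N]) auto
  have "list_orientation e c L \<subseteq> inv_image less_than ?m"
  proof
    fix x assume "x \<in> list_orientation e c L"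
    then obtain p q where "x = (alcove_refl e c p, alcove_refl e c q)"
      "p < CARD('n)" "q < CARD('n)" "precedes L p q"
      unfolding list_orientation_def cyc_arrow_def by blast
    then show "x \<in> inv_image less_than ?m"
      using inv_into_f_f[OF inj, of p] inv_into_f_f[OF inj, of q] by (simp add: precedes_def)
  qed
  moreover have "acyclic (inv_image less_than ?m)" by (intro wf_acyclic wf_inv_image wf_less_than)
  ultimately show "acyclic (list_orientation e c L)" by (rule acyclic_subset[rotated])
qed

lemma produced_by_list_orientation:
  fixes e :: "nat \<Rightarrow> 'n::finite"
  assumes e: "enumeration e" and N: "3 \<le> CARD('n)" and d: "distinct L" and s: "set L = {..<CARD('n)}"
  shows "produced_by_orientation (alcove e c) (list_orientation e c L) (cprod (map (alcove_refl e c) L))"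
  unfolding produced_by_orientation_def
proof (intro exI conjI allI impI)
  have "inj_on (alcove_refl e c) (set L)"
    unfolding s by (intro inj_onI alcove_refl_inj[OF e N]) auto
  then show "distinct (map (alcove_refl e c) L)" using d by (simp add: distinct_map)
  show "set (map (alcove_refl e c) L) = facet_refls (alcove e c)"
    using facet_refls_alcove[OF e N] s by simp
  fix a b assume ab: "a < length (map (alcove_refl e c) L)" "b < length (map (alcove_refl e c) L)"
    "(map (alcove_refl e c) L ! a, map (alcove_refl e c) L ! b) \<in> list_orientation e c L"
  then have "L ! a \<in> set L" "L ! b \<in> set L" by simp_all
  then have "cyc_arrow CARD('n) L (L ! a) (L ! b)"
    using ab(3) mem_list_orientation_iff[OF e N] s ab(1,2) by simp
  then show "a < b"
    using list_pos_nth[OF d] ab(1,2) unfolding cyc_arrow_def precedes_def by simp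
qed (rule refl)

lemma arrow_list_orientation_iff:
  fixes e :: "nat \<Rightarrow> 'n::finite"
  assumes e: "enumeration e" and N: "3 \<le> CARD('n)" and s: "set L = {..<CARD('n)}" and q: "q < CARD('n)"
  shows "(\<exists>t. (t, alcove_refl e c q) \<in> list_orientation e c L) \<longleftrightarrow> (\<exists>p. cyc_arrow CARD('n) L p q)"
    and "(\<exists>t. (alcove_refl e c q, t) \<in> list_orientation e c L) \<longleftrightarrow> (\<exists>p. cyc_arrow CARD('n) L q p)"
proof -
  have in_range: "p < CARD('n)" if "cyc_arrow CARD('n) L p q \<or> cyc_arrow CARD('n) L q p" for p
    using that s unfolding cyc_arrow_def precedes_def by auto
  have obtain_pair: "\<exists>p q. x = (alcove_refl e c p, alcove_refl e c q) \<and> p < CARD('n) \<and> q < CARD('n) \<and>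
      cyc_arrow CARD('n) L p q" if "x \<in> list_orientation e c L" for x
    using that unfolding list_orientation_def by blast
  show "(\<exists>t. (t, alcove_refl e c q) \<in> list_orientation e c L) \<longleftrightarrow> (\<exists>p. cyc_arrow CARD('n) L p q)"
  proof
    assume "\<exists>t. (t, alcove_refl e c q) \<in> list_orientation e c L"
    then obtain t p q' where "alcove_refl e c q = alcove_refl e c q'" "q' < CARD('n)"
      "cyc_arrow CARD('n) L p q'" using obtain_pair by blast
    then show "\<exists>p. cyc_arrow CARD('n) L p q" using alcove_refl_inj[OF e N q] by blast
  next
    assume "\<exists>p. cyc_arrow CARD('n) L p q"
    then obtain p where "cyc_arrow CARD('n) L p q" by blast
    then show "\<exists>t. (t, alcove_refl e c q) \<in> list_orientation e c L"
      using mem_list_orientation_iff[OF e N in_range q] by blast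
  qed
  show "(\<exists>t. (alcove_refl e c q, t) \<in> list_orientation e c L) \<longleftrightarrow> (\<exists>p. cyc_arrow CARD('n) L q p)"
  proof
    assume "\<exists>t. (alcove_refl e c q, t) \<in> list_orientation e c L"
    then obtain t p q' where "alcove_refl e c q = alcove_refl e c q'" "q' < CARD('n)"
      "cyc_arrow CARD('n) L q' p" using obtain_pair by blast
    then show "\<exists>p. cyc_arrow CARD('n) L q p" using alcove_refl_inj[OF e N q] by blast
  next
    assume "\<exists>p. cyc_arrow CARD('n) L q p"
    then obtain p where "cyc_arrow CARD('n) L q p" by blast
    then show "\<exists>t. (alcove_refl e c q, t) \<in> list_orientation e c L"
      using mem_list_orientation_iff[OF e N q in_range] by blast
  qed
qed

lemma source_sink_list_orientation_iff:
  fixes e :: "nat \<Rightarrow> 'n::finite"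
  assumes e: "enumeration e" and N: "3 \<le> CARD('n)" and s: "set L = {..<CARD('n)}" and q: "q < CARD('n)"
  shows "is_source (alcove e c) (list_orientation e c L) (alcove_refl e c q) \<longleftrightarrow> cyc_source CARD('n) L q"
    and "is_sink (alcove e c) (list_orientation e c L) (alcove_refl e c q) \<longleftrightarrow> cyc_sink CARD('n) L q"
  using arrow_list_orientation_iff[OF e N s q, of c] facet_refls_alcove[OF e N, of c] q
  unfolding is_source_def is_sink_def cyc_source_def cyc_sink_def by blast+

lemma ex1_in_image:
  assumes "\<And>s. P s \<Longrightarrow> s \<in> f ` A" "\<And>q. q \<in> A \<Longrightarrow> P (f q) \<longleftrightarrow> q = q0" "q0 \<in> A"
  shows "\<exists>!s. P s"
proof
  show "P (f q0)" using assms(2,3) by blast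
  fix s assume "P s"
  then obtain q where "q \<in> A" "s = f q" using assms(1) by blast
  then show "s = f q0" using assms(2) \<open>P s\<close> by blast
qed

lemma bigon_coxeter_element_list:
  fixes e :: "nat \<Rightarrow> 'n::finite"
  assumes e: "enumeration e" and N: "3 \<le> CARD('n)" and d: "distinct L" and s: "set L = {..<CARD('n)}"
    and no_src: "\<And>k. 0 < k \<Longrightarrow> k < CARD('n) \<Longrightarrow> \<not> cyc_source CARD('n) L k"
  shows "bigon_coxeter_element (alcove e c) (cprod (map (alcove_refl e c) L))"
proof -
  let ?O = "list_orientation e c L"
  have N2: "2 \<le> CARD('n)" using N by simp
  have facet: "s \<in> alcove_refl e c ` {..<CARD('n)}"
    if "is_source (alcove e c) ?O s \<or> is_sink (alcove e c) ?O s" for s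
    using that facet_refls_alcove[OF e N] unfolding is_source_def is_sink_def by blast
  have "\<exists>!s. is_source (alcove e c) ?O s"
    using facet source_sink_list_orientation_iff(1)[OF e N s] no_interior_source_unique_source[OF N2 s no_src]
    by (intro ex1_in_image[of _ "alcove_refl e c" "{..<CARD('n)}" 0]) auto
  moreover obtain p where "p < CARD('n)" "\<forall>k<CARD('n). cyc_sink CARD('n) L k \<longleftrightarrow> k = p"
    using no_interior_source_unique_sink[OF N2 s no_src] by blast
  then have "\<exists>!s. is_sink (alcove e c) ?O s"
    using facet source_sink_list_orientation_iff(2)[OF e N s]
    by (intro ex1_in_image[of _ "alcove_refl e c" "{..<CARD('n)}" p]) auto
  moreover have "CARD('n) \<noteq> 2" using N by simp
  ultimately show ?thesis
    using acyclic_list_orientation[OF e N s, of c] produced_by_list_orientation[OF e N d s, of c]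
    unfolding bigon_coxeter_element_def by (simp only: if_False) blast
qed

section \<open>Moving sources to the end\<close>

lemma alcove_move_source_last:
  fixes e :: "nat \<Rightarrow> 'n::finite"
  assumes e: "enumeration e" and N: "3 \<le> CARD('n)"
    and d: "distinct (A @ k # B)" and s: "set (A @ k # B) = {..<CARD('n)}"
    and k: "0 < k" "k < CARD('n)" and src: "cyc_source CARD('n) (A @ k # B) k"
  shows "\<exists>e' c'. enumeration e' \<and>
    cprod (map (alcove_refl e c) (A @ k # B)) = cprod (map (alcove_refl e' c') (A @ B @ [k]))"
proof -
  let ?R = "alcove_refl e c" and ?N = "CARD('n)"
  \<comment> \<open>the neighbours of the source \<open>k\<close> come after it, so \<open>?R k\<close> commutes with everything before it\<close>
  have "?R a \<circ> ?R k = ?R k \<circ> ?R a" if a: "a \<in> set A" for a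
  proof -
    have "precedes (A @ k # B) a k" using precedes_middle[OF d a] .
    then have "\<not> cyc_adj ?N a k" using src unfolding cyc_source_def cyc_arrow_def by blast
    moreover have "a < ?N" "a \<noteq> k" using a s d by auto
    ultimately show ?thesis using alcove_refl_commute_iff[OF e N _ k(2)] by blast
  qed
  then have front: "cprod (map ?R (A @ k # B)) = cprod (map ?R (k # A @ B))"
    by (intro cprod_move_to_front) blast
  obtain e' c' where e': "enumeration e'" and r0: "alcove_refl e' c' k = ?R k"
    and r: "\<And>j. j < ?N \<Longrightarrow> j \<noteq> k \<Longrightarrow> alcove_refl e' c' j = ?R k \<circ> ?R j \<circ> ?R k"
    using exists_alcove_conjugate[OF e N k(2)] by blast
  have inv: "\<And>y. ?R k (?R k y) = y" using alcove_refl_refl[OF e _ k(2)] N by simp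
  have conj: "map (alcove_refl e' c') (A @ B) = map (\<lambda>j. ?R k \<circ> ?R j \<circ> ?R k) (A @ B)"
    using r s d by (intro map_cong) auto
  have "map (alcove_refl e' c') (A @ B @ [k]) = map (alcove_refl e' c') (A @ B) @ [?R k]"
    using r0 by simp
  then have "cprod (map (alcove_refl e' c') (A @ B @ [k])) = cprod (map (alcove_refl e' c') (A @ B)) \<circ> ?R k"
    by (simp only: cprod_append) simp
  also have "\<dots> = (?R k \<circ> cprod (map ?R (A @ B)) \<circ> ?R k) \<circ> ?R k"
    unfolding conj cprod_conjugate[OF inv] ..
  also have "\<dots> = cprod (map ?R (A @ k # B))" using front inv by (simp add: fun_eq_iff)
  finally show ?thesis using e' by metis
qed

lemma exists_alcove_without_interior_source:
  fixes e :: "nat \<Rightarrow> 'n::finite"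
  assumes N: "3 \<le> CARD('n)"
  shows "enumeration e \<Longrightarrow> distinct L \<Longrightarrow> set L = {..<CARD('n)} \<Longrightarrow>
    \<exists>e' c' L'. enumeration e' \<and> distinct L' \<and> set L' = {..<CARD('n)} \<and>
      cprod (map (alcove_refl e c) L) = cprod (map (alcove_refl e' c') L') \<and>
      (\<forall>k. 0 < k \<longrightarrow> k < CARD('n) \<longrightarrow> \<not> cyc_source CARD('n) L' k)"
proof (induction "clockwise_weight CARD('n) L" arbitrary: L e c rule: less_induct)
  case less
  have N2: "2 \<le> CARD('n)" using N by simp
  show ?case
  proof (cases "\<exists>k. 0 < k \<and> k < CARD('n) \<and> cyc_source CARD('n) L k")
    case False
    then show ?thesis using less.prems by blast
  next
    case True
    then obtain k where k: "0 < k" "k < CARD('n)" "cyc_source CARD('n) L k" by blast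
    then obtain A B where L: "L = A @ k # B" using less.prems(3) split_list[of k L] by auto
    obtain e1 c1 where e1: "enumeration e1"
      and eq: "cprod (map (alcove_refl e c) L) = cprod (map (alcove_refl e1 c1) (A @ B @ [k]))"
      using alcove_move_source_last[OF less.prems(1) N, of A k B c] less.prems(2,3) k unfolding L by blast
    have "clockwise_weight CARD('n) (A @ B @ [k]) < clockwise_weight CARD('n) L"
      using clockwise_weight_move_source_last[OF N2, of A k B] less.prems(2,3) k unfolding L by blast
    moreover have "distinct (A @ B @ [k])" "set (A @ B @ [k]) = {..<CARD('n)}"
      using less.prems(2,3) unfolding L by auto
    ultimately show ?thesis using less.hyps e1 eq by metis
  qed
qed

theorem corollary7p8:
  fixes w :: "real^'n::finite \<Rightarrow> real^'n"
  assumes "CARD('n) \<ge> 2"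
    and "coxeter_element w"
  shows "\<exists>C. chamber C \<and> bigon_coxeter_element C w"
proof -
  obtain C ss where C: "chamber C" "distinct ss" "set ss = facet_refls C" "w = cprod ss"
    using assms(2) unfolding coxeter_element_def by blast
  show ?thesis
  proof (cases "CARD('n) = 2")
    case True
    then show ?thesis using C unfolding bigon_coxeter_element_def by auto
  next
    case False
    then have N: "3 \<le> CARD('n)" using assms(1) by simp
    obtain e :: "nat \<Rightarrow> 'n" and c where e: "enumeration e" and "C = alcove e c"
      using chamber_is_alcove[OF assms(1) C(1)] by blast
    then have "set ss = alcove_refl e c ` {..<CARD('n)}" using C(3) facet_refls_alcove[OF e N] by simp
    moreover have "inj_on (alcove_refl e c) {..<CARD('n)}" by (intro inj_onI alcove_refl_inj[OF e N]) auto
    ultimately obtain L where L: "distinct L" "set L = {..<CARD('n)}" "ss = map (alcove_refl e c) L"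
      using exists_index_list[OF C(2)] by blast
    obtain e' c' L' where e': "enumeration e'" "distinct L'" "set L' = {..<CARD('n)}"
      and w: "w = cprod (map (alcove_refl e' c') L')"
      and no_src: "\<forall>k. 0 < k \<longrightarrow> k < CARD('n) \<longrightarrow> \<not> cyc_source CARD('n) L' k"
      using exists_alcove_without_interior_source[OF N e L(1,2), of c] C(4) L(3) by auto
    show ?thesis
      using chamber_alcove[OF e'(1) assms(1)] bigon_coxeter_element_list[OF e'(1) N e'(2,3) no_src[rule_format]] w
      by blast
  qed
qed

end
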